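(* Let $k\ge 1$, $n=2k$, $a\in\mathbb{D}\setminus\{0\}$, $\sigma_a(z)=\frac{z-a}{1-\overline{a}z}$, $h(z)=z^{n}$, and let $B=\sigma_a\circ h\circ\sigma_a^{-1}$ be a reducible Blaschke product of degree $2k$ with conjugate factor $\sigma_a$. List the $2k$ distinct $2k$-th roots of $a$ as $\omega_1,\dots,\omega_{2k}$ in increasing order of principal argument in $[0,2\pi)$ (indices taken modulo $2k$), so that the zeros of $B$ are $\sigma_a(\omega_1),\dots,\sigma_a(\omega_{2k})$. Then: (1) for every $j$, the hyperbolic geodesic in the Poincaré disk through the "opposite" zeros $\sigma_a(\omega_j)$ and $\sigma_a(-\omega_j)=\sigma_a(\omega_{j+k})$ passes through $-a$; thus $-a$ lies at the intersection of the hyperbolic geodesics through opposite pairs of zeros of $B$; (2) for every $j$, the unsigned angle at $\sigma_a(\omega_j)$ between the hyperbolic geodesic through $\sigma_a(\omega_{j-1}),\sigma_a(\omega_j)$ and the hyperbolic geodesic through $\sigma_a(\omega_j),\sigma_a(\omega_{j+1})$ equals the unsigned angle at $\omega_j$ between the hyperbolic geodesic through $\omega_{j-1},\omega_j$ and the hyperbolic geodesic through $\omega_j,\omega_{j+1}$.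
   Context: $\mathbb{D}$ is the open unit disk with the Poincaré (hyperbolic) metric; its geodesics are the diameters of $\mathbb{D}$ and the arcs in $\mathbb{D}$ of circles meeting the unit circle orthogonally. A degree-$n$ Blaschke product $B$ is called reducible if $B=\sigma_a\circ h\circ\sigma_a^{-1}$ for some $a\in\mathbb{D}$, with $\sigma_a(z)=\frac{z-a}{1-\overline{a}z}$, $h(z)=z^n$; $\sigma_a$ is its conjugate factor. *)

theory Defs
  imports "HOL-Analysis.Analysis"
begin

definition sigma :: "complex \<Rightarrow> complex \<Rightarrow> complex" where
  "sigma a z = (z - a) / (1 - cnj a * z)"

definition arg02 :: "complex \<Rightarrow> real" where
  "arg02 z = (if Arg z < 0 then Arg z + 2 * pi else Arg z)"

text \<open>Hyperbolic geodesics of the Poincare disk: diameters, and arcs inside the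
  disk of circles meeting the unit circle orthogonally (|c|^2 = 1 + r^2).\<close>
definition is_hgeodesic :: "complex set \<Rightarrow> bool" where
  "is_hgeodesic G \<longleftrightarrow>
     (\<exists>u. cmod u = 1 \<and> G = {complex_of_real t * u | t. \<bar>t\<bar> < 1}) \<or>
     (\<exists>c r. r > 0 \<and> (cmod c)\<^sup>2 = 1 + r\<^sup>2 \<and> G = {z. cmod (z - c) = r \<and> cmod z < 1})"

definition hgeodesic :: "complex \<Rightarrow> complex \<Rightarrow> complex set" where
  "hgeodesic p q = (THE G. is_hgeodesic G \<and> p \<in> G \<and> q \<in> G)"

text \<open>Unit tangent direction at p of the geodesic G, pointing along G towards q
  (limit of the unit chords from p to points of the branch of G - {p} containing q).\<close>
definition tangent_dir :: "complex set \<Rightarrow> complex \<Rightarrow> complex \<Rightarrow> complex" where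
  "tangent_dir G p q =
     Lim (at p within connected_component_set (G - {p}) q)
         (\<lambda>z. (z - p) / complex_of_real (cmod (z - p)))"

definition hangle :: "complex \<Rightarrow> complex \<Rightarrow> complex \<Rightarrow> real" where
  "hangle v u w =
     arccos (Re (tangent_dir (hgeodesic v u) v u * cnj (tangent_dir (hgeodesic v w) v w)))"

end

theory Submission
  imports Defs "HOL-Complex_Analysis.Riemann_Mapping"
begin

text \<open>The map \<open>sigma a\<close> is an automorphism of the disc with inverse \<open>sigma (- a)\<close>.
  Geodesics are exactly the zero sets in the disc of the Hermitian forms
  \<open>A |z|\<^sup>2 + 2 Re (cnj \<beta> z) + A\<close> with \<open>A\<^sup>2 < |\<beta>|\<^sup>2\<close>, a class that \<open>sigma a\<close> visibly
  preserves; so \<open>sigma a\<close> maps the geodesic through \<open>p, q\<close> onto the one through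
  \<open>sigma a p, sigma a q\<close>. As \<open>sigma a z - sigma a p = (z - p) K(z, p)\<close> with \<open>K\<close> continuous
  and nonvanishing, \<open>sigma a\<close> turns every tangent direction at \<open>p\<close> by the same angle
  \<open>arg K(p, p)\<close> and therefore preserves the angles between geodesics: this is (2).
  Sorted by argument, the \<open>2k\<close>-th roots of \<open>a\<close> satisfy \<open>arg \<omega>\<^sub>j = (arg a + 2 \<pi> j) / 2k\<close>,
  so \<open>\<omega> (j + k) = - \<omega> j\<close>. The geodesic through \<open>\<omega> j\<close> and \<open>- \<omega> j\<close> is a diameter, hence
  passes through \<open>0\<close>, and its image under \<open>sigma a\<close> passes through \<open>sigma a 0 = - a\<close>:
  this is (1).\<close>

abbreviation unit_disc :: "complex set" where
  "unit_disc \<equiv> {z. cmod z < 1}"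

section \<open>The disc automorphisms\<close>

lemma sigma_eq_Moebius_function: "sigma b = Moebius_function 0 b"
  by (simp add: fun_eq_iff sigma_def Moebius_function_simple)

lemma sigma_denom_nonzero:
  assumes "cmod b < 1" and "cmod z < 1"
  shows "1 - cnj b * z \<noteq> 0"
proof
  assume "1 - cnj b * z = 0"
  then have "cmod (cnj b * z) = 1" by simp
  moreover have "cmod (cnj b * z) < 1 * 1"
    using assms by (intro norm_mult_less) simp_all
  ultimately show False by simp
qed

lemma sigma_zero [simp]: "sigma b 0 = - b"
  by (simp add: sigma_def)

lemma sigma_self [simp]: "sigma b b = 0"
  by (simp add: sigma_def)

lemma norm_sigma_less_1: "cmod b < 1 \<Longrightarrow> cmod z < 1 \<Longrightarrow> cmod (sigma b z) < 1"
  by (simp add: sigma_eq_Moebius_function Moebius_function_norm_lt_1)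

lemma sigma_minus_sigma: "cmod b < 1 \<Longrightarrow> cmod z < 1 \<Longrightarrow> sigma (- b) (sigma b z) = z"
  by (simp add: sigma_eq_Moebius_function Moebius_function_compose)

lemma continuous_on_sigma: "cmod b < 1 \<Longrightarrow> continuous_on unit_disc (sigma b)"
  unfolding sigma_def by (intro continuous_intros) (auto dest: sigma_denom_nonzero)

lemma homeomorphism_sigma:
  assumes "cmod b < 1"
  shows "homeomorphism unit_disc unit_disc (sigma b) (sigma (- b))"
proof (rule homeomorphismI)
  have "cmod (- b) < 1" using assms by simp
  then show "continuous_on unit_disc (sigma b)" "continuous_on unit_disc (sigma (- b))"
    "sigma b ` unit_disc \<subseteq> unit_disc" "sigma (- b) ` unit_disc \<subseteq> unit_disc"
    using assms by (auto intro: continuous_on_sigma norm_sigma_less_1)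
  show "sigma (- b) (sigma b z) = z" if "z \<in> unit_disc" for z
    using assms that by (simp add: sigma_minus_sigma)
  show "sigma b (sigma (- b) z) = z" if "z \<in> unit_disc" for z
    using sigma_minus_sigma[of "- b" z] assms that by simp
qed

lemma inj_on_sigma: "cmod b < 1 \<Longrightarrow> inj_on (sigma b) unit_disc"
  by (rule inj_on_inverseI[where g = "sigma (- b)"]) (simp add: sigma_minus_sigma)

lemma sigma_minus_image_sigma_image:
  assumes "cmod b < 1" and "S \<subseteq> unit_disc"
  shows "sigma (- b) ` sigma b ` S = S"
proof -
  have "sigma (- b) ` sigma b ` S = (\<lambda>z. z) ` S"
    unfolding image_image using assms sigma_minus_sigma by (intro image_cong) auto
  then show ?thesis by simp
qed

lemma sigma_eq_0_iff:
  assumes "cmod b < 1" and "cmod z < 1"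
  shows "sigma b z = 0 \<longleftrightarrow> z = b"
  using sigma_denom_nonzero[OF assms] by (simp add: sigma_def)

definition sigma_diff_quotient :: "complex \<Rightarrow> complex \<Rightarrow> complex \<Rightarrow> complex" where
  "sigma_diff_quotient b z p = (1 - cnj b * b) / ((1 - cnj b * z) * (1 - cnj b * p))"

lemma sigma_diff:
  assumes "cmod b < 1" and "cmod z < 1" and "cmod p < 1"
  shows "sigma b z - sigma b p = (z - p) * sigma_diff_quotient b z p"
  using sigma_denom_nonzero[OF assms(1,2)] sigma_denom_nonzero[OF assms(1,3)]
  unfolding sigma_def sigma_diff_quotient_def by (simp add: field_simps)

lemma sigma_diff_quotient_nonzero:
  assumes "cmod b < 1" and "cmod z < 1" and "cmod p < 1"
  shows "sigma_diff_quotient b z p \<noteq> 0"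
  using sigma_denom_nonzero[OF assms(1,1)] sigma_denom_nonzero[OF assms(1,2)]
    sigma_denom_nonzero[OF assms(1,3)]
  unfolding sigma_diff_quotient_def by simp

section \<open>Geodesics as zero sets of Hermitian forms\<close>

text \<open>For \<open>A = 0\<close> the set \<open>hcircle A \<beta>\<close> is a diameter, otherwise an arc of the circle
  with centre \<open>- \<beta> / A\<close>.\<close>

definition hform :: "real \<Rightarrow> complex \<Rightarrow> complex \<Rightarrow> complex" where
  "hform A \<beta> z = of_real A * z * cnj z + cnj \<beta> * z + \<beta> * cnj z + of_real A"

definition hcircle :: "real \<Rightarrow> complex \<Rightarrow> complex set" where
  "hcircle A \<beta> = {z. cmod z < 1 \<and> hform A \<beta> z = 0}"

lemma hcircle_scale:
  assumes "c \<noteq> 0"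
  shows "hcircle (c * A) (of_real c * \<beta>) = hcircle A \<beta>"
proof -
  have "hform (c * A) (of_real c * \<beta>) z = of_real c * hform A \<beta> z" for z
    unfolding hform_def by (simp add: algebra_simps)
  then show ?thesis
    using assms unfolding hcircle_def by simp
qed

lemma hform_diameter: "hform 0 (\<i> * w) z = of_real (2 * Im (cnj w * z))"
  by (simp add: hform_def complex_eq_iff algebra_simps)

lemma mem_hcircle_diameter_iff:
  "z \<in> hcircle 0 (\<i> * w) \<longleftrightarrow> cmod z < 1 \<and> Im (cnj w * z) = 0"
  unfolding hcircle_def mem_Collect_eq hform_diameter of_real_eq_0_iff by simp

lemma diameter_eq_hcircle:
  assumes u: "cmod u = 1"
  shows "{of_real t * u | t. \<bar>t\<bar> < 1} = hcircle 0 (\<i> * u)"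
proof (intro set_eqI iffI)
  fix z assume "z \<in> {of_real t * u | t. \<bar>t\<bar> < 1}"
  then obtain t where "\<bar>t\<bar> < 1" "z = of_real t * u" by auto
  then show "z \<in> hcircle 0 (\<i> * u)"
    using u by (simp add: mem_hcircle_diameter_iff norm_mult algebra_simps)
next
  fix z assume "z \<in> hcircle 0 (\<i> * u)"
  then have z: "cmod z < 1" "Im (cnj u * z) = 0"
    by (simp_all add: mem_hcircle_diameter_iff)
  define t where "t = Re (cnj u * z)"
  have "u * cnj u = 1"
    using u complex_norm_square[of u] by simp
  moreover have "cnj u * z = of_real t"
    using z(2) unfolding t_def by (simp add: complex_eq_iff)
  ultimately have "z = of_real t * u"
    by (metis mult.assoc mult.commute mult_1)
  moreover have "\<bar>t\<bar> < 1"
    using z u \<open>z = of_real t * u\<close> by (simp add: norm_mult)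
  ultimately show "z \<in> {of_real t * u | t. \<bar>t\<bar> < 1}" by blast
qed

lemma orthogonal_circle_eq_hcircle:
  assumes r: "r > 0" and c: "(cmod c)\<^sup>2 = 1 + r\<^sup>2"
  shows "{z. cmod (z - c) = r \<and> cmod z < 1} = hcircle 1 (- c)"
proof -
  have hform_eq: "hform 1 (- c) z = of_real ((cmod (z - c))\<^sup>2 - r\<^sup>2)" for z
  proof -
    have "of_real (r\<^sup>2) = c * cnj c - 1"
      using c complex_norm_square[of c] by (metis add_diff_cancel_left' of_real_1 of_real_add)
    then have "of_real ((cmod (z - c))\<^sup>2 - r\<^sup>2) = (z - c) * cnj (z - c) - (c * cnj c - 1)"
      by (simp only: of_real_diff complex_norm_square)
    then show ?thesis
      by (simp add: hform_def algebra_simps)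
  qed
  have on_circle_iff: "cmod (z - c) = r \<longleftrightarrow> (cmod (z - c))\<^sup>2 - r\<^sup>2 = 0" for z
    using r by (simp add: power2_eq_iff_nonneg)
  show ?thesis
    unfolding hcircle_def hform_eq of_real_eq_0_iff on_circle_iff by blast
qed

lemma is_hgeodesic_hcircle:
  assumes nd: "A\<^sup>2 < (cmod \<beta>)\<^sup>2"
  shows "is_hgeodesic (hcircle A \<beta>)"
proof (cases "A = 0")
  case True
  then have "\<beta> \<noteq> 0"
    using nd by auto
  define u where "u = - \<i> * \<beta> / of_real (cmod \<beta>)"
  have u: "cmod u = 1"
    using \<open>\<beta> \<noteq> 0\<close> unfolding u_def by (simp add: norm_divide norm_mult)
  have "hcircle 0 (\<i> * u) = hcircle ((1 / cmod \<beta>) * 0) (of_real (1 / cmod \<beta>) * \<beta>)"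
    unfolding u_def by (simp add: field_simps)
  also have "\<dots> = hcircle 0 \<beta>"
    using \<open>\<beta> \<noteq> 0\<close> by (intro hcircle_scale) simp
  finally show ?thesis
    unfolding is_hgeodesic_def using True u diameter_eq_hcircle[OF u]
    by (intro disjI1 exI[of _ u]) auto
next
  case False
  define c where "c = - \<beta> / of_real A"
  define r where "r = sqrt ((cmod c)\<^sup>2 - 1)"
  have "(cmod c)\<^sup>2 > 1"
    using nd False unfolding c_def by (simp add: norm_divide power_divide divide_less_eq)
  then have r: "r > 0" "(cmod c)\<^sup>2 = 1 + r\<^sup>2"
    unfolding r_def by auto
  have "hcircle 1 (- c) = hcircle ((1 / A) * A) (of_real (1 / A) * \<beta>)"
    using False unfolding c_def by (simp add: field_simps)
  also have "\<dots> = hcircle A \<beta>"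
    using False by (intro hcircle_scale) simp
  finally show ?thesis
    unfolding is_hgeodesic_def using r orthogonal_circle_eq_hcircle[OF r]
    by (intro disjI2 exI[of _ c] exI[of _ r]) auto
qed

lemma is_hgeodesic_iff_hcircle:
  "is_hgeodesic G \<longleftrightarrow> (\<exists>A \<beta>. A\<^sup>2 < (cmod \<beta>)\<^sup>2 \<and> G = hcircle A \<beta>)"
proof
  assume "is_hgeodesic G"
  then consider (diameter) u where "cmod u = 1" "G = {of_real t * u | t. \<bar>t\<bar> < 1}"
    | (circle) c r where "r > 0" "(cmod c)\<^sup>2 = 1 + r\<^sup>2" "G = {z. cmod (z - c) = r \<and> cmod z < 1}"
    unfolding is_hgeodesic_def by blast
  then show "\<exists>A \<beta>. A\<^sup>2 < (cmod \<beta>)\<^sup>2 \<and> G = hcircle A \<beta>"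
  proof cases
    case diameter
    then show ?thesis
      using diameter_eq_hcircle by (intro exI[of _ 0] exI[of _ "\<i> * u"]) (simp add: norm_mult)
  next
    case circle
    then show ?thesis
      using orthogonal_circle_eq_hcircle by (intro exI[of _ 1] exI[of _ "- c"]) simp
  qed
qed (auto intro: is_hgeodesic_hcircle)

text \<open>The coefficients of the form \<open>hform A \<beta>\<close> pulled back along \<open>sigma (- b)\<close>, after
  clearing the denominator \<open>|1 + cnj b z|\<^sup>2\<close>.\<close>

definition sigma_coeff_A :: "complex \<Rightarrow> real \<Rightarrow> complex \<Rightarrow> real" where
  "sigma_coeff_A b A \<beta> = A * (1 + (cmod b)\<^sup>2) + 2 * Re (cnj \<beta> * b)"

definition sigma_coeff_B :: "complex \<Rightarrow> real \<Rightarrow> complex \<Rightarrow> complex" where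
  "sigma_coeff_B b A \<beta> = 2 * of_real A * b + \<beta> + cnj \<beta> * b\<^sup>2"

lemma of_real_sigma_coeff_A:
  "of_real (sigma_coeff_A b A \<beta>) = of_real A * (1 + b * cnj b) + cnj \<beta> * b + \<beta> * cnj b"
proof -
  have "of_real (2 * Re (cnj \<beta> * b)) = cnj \<beta> * b + \<beta> * cnj b"
    using complex_add_cnj[of "cnj \<beta> * b"] by simp
  then show ?thesis
    unfolding sigma_coeff_A_def of_real_add of_real_mult complex_norm_square
    by (simp add: algebra_simps)
qed

lemma hform_sigma_minus:
  assumes "cmod b < 1" and "cmod z < 1"
  shows "hform A \<beta> (sigma (- b) z) * ((1 + cnj b * z) * cnj (1 + cnj b * z))
       = hform (sigma_coeff_A b A \<beta>) (sigma_coeff_B b A \<beta>) z"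
proof -
  define D where "D = 1 + cnj b * z"
  define w where "w = sigma (- b) z"
  have "D \<noteq> 0"
    using sigma_denom_nonzero[of "- b" z] assms unfolding D_def by simp
  then have wD: "w * D = z + b"
    unfolding w_def D_def sigma_def by simp
  have cwD: "cnj w * cnj D = cnj z + cnj b"
    using arg_cong[OF wD, of cnj] by simp
  have "hform A \<beta> w * (D * cnj D)
      = of_real A * (w * D) * (cnj w * cnj D) + cnj \<beta> * (w * D) * cnj D
        + \<beta> * (cnj w * cnj D) * D + of_real A * D * cnj D"
    unfolding hform_def by (simp add: algebra_simps)
  also have "\<dots> = of_real A * (z + b) * (cnj z + cnj b) + cnj \<beta> * (z + b) * cnj D
        + \<beta> * (cnj z + cnj b) * D + of_real A * D * cnj D"
    by (simp only: wD cwD)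
  also have "\<dots> = hform (sigma_coeff_A b A \<beta>) (sigma_coeff_B b A \<beta>) z"
    unfolding hform_def of_real_sigma_coeff_A sigma_coeff_B_def D_def
    by (simp add: algebra_simps power2_eq_square)
  finally show ?thesis
    unfolding w_def D_def .
qed

lemma sigma_coeff_discriminant:
  "(cmod (sigma_coeff_B b A \<beta>))\<^sup>2 - (sigma_coeff_A b A \<beta>)\<^sup>2
     = (1 - (cmod b)\<^sup>2)\<^sup>2 * ((cmod \<beta>)\<^sup>2 - A\<^sup>2)"
proof -
  have norm_sq: "(of_real (cmod z))\<^sup>2 = z * cnj z" for z
    by (metis complex_norm_square of_real_power)
  have "of_real ((cmod (sigma_coeff_B b A \<beta>))\<^sup>2 - (sigma_coeff_A b A \<beta>)\<^sup>2)
      = (of_real ((1 - (cmod b)\<^sup>2)\<^sup>2 * ((cmod \<beta>)\<^sup>2 - A\<^sup>2)) :: complex)"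
    unfolding sigma_coeff_B_def
    by (simp only: of_real_diff of_real_mult of_real_power of_real_1 norm_sq of_real_sigma_coeff_A)
      (simp add: algebra_simps power2_eq_square)
  then show ?thesis
    using of_real_eq_iff by blast
qed

lemma sigma_image_hcircle:
  assumes b: "cmod b < 1"
  shows "sigma b ` hcircle A \<beta> = hcircle (sigma_coeff_A b A \<beta>) (sigma_coeff_B b A \<beta>)"
proof (intro set_eqI iffI)
  fix z assume "z \<in> sigma b ` hcircle A \<beta>"
  then obtain w where w: "cmod w < 1" "hform A \<beta> w = 0" and z: "z = sigma b w"
    unfolding hcircle_def by blast
  have "cmod z < 1"
    using norm_sigma_less_1[OF b w(1)] z by simp
  moreover have "sigma (- b) z = w"
    using sigma_minus_sigma[OF b w(1)] z by simp
  ultimately show "z \<in> hcircle (sigma_coeff_A b A \<beta>) (sigma_coeff_B b A \<beta>)"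
    using hform_sigma_minus[OF b, of z A \<beta>] w(2) unfolding hcircle_def by simp
next
  fix z assume "z \<in> hcircle (sigma_coeff_A b A \<beta>) (sigma_coeff_B b A \<beta>)"
  then have z: "cmod z < 1" and "hform (sigma_coeff_A b A \<beta>) (sigma_coeff_B b A \<beta>) z = 0"
    unfolding hcircle_def by auto
  moreover have "1 + cnj b * z \<noteq> 0"
    using sigma_denom_nonzero[of "- b" z] b z by simp
  moreover from this have "1 + b * cnj z \<noteq> 0"
    by (metis complex_cnj_add complex_cnj_cnj complex_cnj_mult complex_cnj_one complex_cnj_zero)
  ultimately have "hform A \<beta> (sigma (- b) z) = 0"
    using hform_sigma_minus[OF b z, of A \<beta>] by simp
  moreover have "cmod (sigma (- b) z) < 1"
    using norm_sigma_less_1[of "- b" z] b z by simp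
  moreover have "sigma b (sigma (- b) z) = z"
    using sigma_minus_sigma[of "- b" z] b z by simp
  ultimately show "z \<in> sigma b ` hcircle A \<beta>"
    unfolding hcircle_def by (metis (mono_tags, lifting) image_eqI mem_Collect_eq)
qed

lemma is_hgeodesic_sigma_image:
  assumes b: "cmod b < 1" and G: "is_hgeodesic G"
  shows "is_hgeodesic (sigma b ` G)"
proof -
  obtain A \<beta> where nd: "A\<^sup>2 < (cmod \<beta>)\<^sup>2" and "G = hcircle A \<beta>"
    using G unfolding is_hgeodesic_iff_hcircle by blast
  moreover have "(cmod b)\<^sup>2 < 1"
    using b by (simp add: abs_square_less_1)
  then have "(1 - (cmod b)\<^sup>2)\<^sup>2 * ((cmod \<beta>)\<^sup>2 - A\<^sup>2) > 0"
    using nd by simp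
  then have "(sigma_coeff_A b A \<beta>)\<^sup>2 < (cmod (sigma_coeff_B b A \<beta>))\<^sup>2"
    using sigma_coeff_discriminant[of b A \<beta>] by linarith
  ultimately show ?thesis
    unfolding is_hgeodesic_iff_hcircle using sigma_image_hcircle[OF b] by blast
qed

lemma is_hgeodesic_subset_disc: "is_hgeodesic G \<Longrightarrow> G \<subseteq> unit_disc"
  unfolding is_hgeodesic_iff_hcircle hcircle_def by auto

section \<open>The geodesic through two points\<close>

lemma is_hgeodesic_diameter: "w \<noteq> 0 \<Longrightarrow> is_hgeodesic (hcircle 0 (\<i> * w))"
  by (intro is_hgeodesic_hcircle) (simp add: norm_mult)

lemma is_hgeodesic_through_0:
  assumes "is_hgeodesic G" and "0 \<in> G" and "w \<in> G" and "w \<noteq> 0"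
  shows "G = hcircle 0 (\<i> * w)"
proof -
  obtain A \<beta> where nd: "A\<^sup>2 < (cmod \<beta>)\<^sup>2" and G: "G = hcircle A \<beta>"
    using assms(1) unfolding is_hgeodesic_iff_hcircle by blast
  have A: "A = 0"
    using \<open>0 \<in> G\<close> G by (simp add: hcircle_def hform_def)
  then have "\<beta> \<noteq> 0"
    using nd by auto
  have "hform 0 \<beta> w = 0"
    using \<open>w \<in> G\<close> G A by (simp add: hcircle_def)
  then have "Re (cnj w * \<beta>) = 0"
    by (simp add: hform_def complex_eq_iff mult.commute)
  define s where "s = Im (cnj w * \<beta>)"
  have s: "cnj w * \<beta> = \<i> * of_real s"
    using \<open>Re (cnj w * \<beta>) = 0\<close> unfolding s_def by (simp add: complex_eq_iff)
  have "\<beta> * of_real ((cmod w)\<^sup>2) = w * (cnj w * \<beta>)"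
    by (simp only: complex_norm_square) (simp add: mult_ac)
  then have \<beta>: "\<beta> = of_real (s / (cmod w)\<^sup>2) * (\<i> * w)"
    using \<open>w \<noteq> 0\<close> unfolding s by (simp add: field_simps)
  then have "s / (cmod w)\<^sup>2 \<noteq> 0"
    using \<open>\<beta> \<noteq> 0\<close> by auto
  then have "hcircle ((s / (cmod w)\<^sup>2) * 0) (of_real (s / (cmod w)\<^sup>2) * (\<i> * w)) = hcircle 0 (\<i> * w)"
    by (rule hcircle_scale)
  then show ?thesis
    using G A \<beta> by simp
qed

lemma is_hgeodesic_unique:
  assumes G1: "is_hgeodesic G1" "p \<in> G1" "q \<in> G1"
    and G2: "is_hgeodesic G2" "p \<in> G2" "q \<in> G2"
    and "p \<noteq> q"
  shows "G1 = G2"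
proof -
  have p: "cmod p < 1" and q: "cmod q < 1"
    using is_hgeodesic_subset_disc[OF G1(1)] G1 by auto
  define w where "w = sigma p q"
  have "w \<noteq> 0"
    unfolding w_def using sigma_eq_0_iff[OF p q] \<open>p \<noteq> q\<close> by simp
  have "sigma p ` G = hcircle 0 (\<i> * w)"
    if "is_hgeodesic G" "p \<in> G" "q \<in> G" for G
    using that \<open>w \<noteq> 0\<close> unfolding w_def
    by (intro is_hgeodesic_through_0 is_hgeodesic_sigma_image[OF p]) (auto intro!: image_eqI)
  then have "sigma (- p) ` sigma p ` G1 = sigma (- p) ` sigma p ` G2"
    using G1 G2 by simp
  then show ?thesis
    using sigma_minus_image_sigma_image[OF p] is_hgeodesic_subset_disc G1(1) G2(1) by simp
qed

lemma hgeodesic_eqI: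
  assumes "is_hgeodesic G" and "p \<in> G" and "q \<in> G" and "p \<noteq> q"
  shows "hgeodesic p q = G"
  unfolding hgeodesic_def using assms is_hgeodesic_unique by (intro the_equality) blast+

lemma hgeodesic_diameter:
  assumes "cmod w < 1" and "w \<noteq> 0"
  shows "hgeodesic 0 w = hcircle 0 (\<i> * w)"
  using assms by (intro hgeodesic_eqI is_hgeodesic_diameter) (auto simp: mem_hcircle_diameter_iff)

lemma is_hgeodesic_hgeodesic:
  assumes p: "cmod p < 1" and q: "cmod q < 1" and "p \<noteq> q"
  shows "is_hgeodesic (hgeodesic p q)" and "p \<in> hgeodesic p q" and "q \<in> hgeodesic p q"
proof -
  define w where "w = sigma p q"
  have "w \<noteq> 0"
    unfolding w_def using sigma_eq_0_iff[OF p q] \<open>p \<noteq> q\<close> by simp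
  moreover have "cmod w < 1"
    unfolding w_def using norm_sigma_less_1[OF p q] .
  ultimately have "0 \<in> hcircle 0 (\<i> * w)" "w \<in> hcircle 0 (\<i> * w)"
    by (auto simp: mem_hcircle_diameter_iff)
  moreover have "sigma (- p) 0 = p" "sigma (- p) w = q"
    unfolding w_def using sigma_minus_sigma[OF p q] by simp_all
  ultimately have G: "p \<in> sigma (- p) ` hcircle 0 (\<i> * w)" "q \<in> sigma (- p) ` hcircle 0 (\<i> * w)"
    by (metis image_eqI)+
  have "is_hgeodesic (sigma (- p) ` hcircle 0 (\<i> * w))"
    using p \<open>w \<noteq> 0\<close> by (intro is_hgeodesic_sigma_image is_hgeodesic_diameter) simp_all
  then have "hgeodesic p q = sigma (- p) ` hcircle 0 (\<i> * w)"
    using G \<open>p \<noteq> q\<close> by (intro hgeodesic_eqI)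
  then show "is_hgeodesic (hgeodesic p q)" "p \<in> hgeodesic p q" "q \<in> hgeodesic p q"
    using G \<open>is_hgeodesic (sigma (- p) ` hcircle 0 (\<i> * w))\<close> by simp_all
qed

lemma hgeodesic_sigma:
  assumes b: "cmod b < 1" and p: "cmod p < 1" and q: "cmod q < 1" and "p \<noteq> q"
  shows "hgeodesic (sigma b p) (sigma b q) = sigma b ` hgeodesic p q"
proof (rule hgeodesic_eqI)
  show "is_hgeodesic (sigma b ` hgeodesic p q)"
    by (intro is_hgeodesic_sigma_image b is_hgeodesic_hgeodesic p q \<open>p \<noteq> q\<close>)
  show "sigma b p \<in> sigma b ` hgeodesic p q" "sigma b q \<in> sigma b ` hgeodesic p q"
    using is_hgeodesic_hgeodesic[OF p q \<open>p \<noteq> q\<close>] by simp_all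
  show "sigma b p \<noteq> sigma b q"
    using inj_on_sigma[OF b] p q \<open>p \<noteq> q\<close> by (metis inj_on_eq_iff mem_Collect_eq)
qed

lemma neg_in_hgeodesic_sigma_opposite:
  assumes b: "cmod b < 1" and w: "cmod w < 1" "w \<noteq> 0"
  shows "- b \<in> hgeodesic (sigma b w) (sigma b (- w))"
proof -
  have "w \<noteq> - w"
    using w by (simp add: complex_eq_iff)
  then have "hgeodesic w (- w) = hcircle 0 (\<i> * w)"
    using w by (intro hgeodesic_eqI is_hgeodesic_diameter) (auto simp: mem_hcircle_diameter_iff)
  then have "0 \<in> hgeodesic w (- w)"
    by (simp add: mem_hcircle_diameter_iff)
  then have "sigma b 0 \<in> sigma b ` hgeodesic w (- w)"
    by (rule imageI)
  then show ?thesis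
    using hgeodesic_sigma[OF b w(1), of "- w"] w \<open>w \<noteq> - w\<close> by simp
qed

section \<open>Tangent directions\<close>

lemma connected_component_sigma_image:
  assumes "cmod b < 1" and "X \<subseteq> unit_disc" and "x \<in> X"
  shows "connected_component_set (sigma b ` X) (sigma b x) = sigma b ` connected_component_set X x"
proof -
  have "homeomorphism X (sigma b ` X) (sigma b) (sigma (- b))"
    using homeomorphism_sigma[OF assms(1)] assms(2) by (rule homeomorphism_of_subsets) auto
  then show ?thesis
    using assms(3) by (rule connected_component_set_homeomorphism)
qed

lemma filterlim_sigma_at_within:
  assumes b: "cmod b < 1" and S: "S \<subseteq> unit_disc" and p: "cmod p < 1"
  shows "filterlim (sigma b) (at (sigma b p) within sigma b ` S) (at p within S)"
  unfolding filterlim_at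
proof
  show "\<forall>\<^sub>F z in at p within S. sigma b z \<in> sigma b ` S \<and> sigma b z \<noteq> sigma b p"
    unfolding eventually_at_filter using S p inj_on_sigma[OF b]
    by (intro always_eventually) (auto simp: inj_on_eq_iff)
  show "(sigma b \<longlongrightarrow> sigma b p) (at p within S)"
    unfolding sigma_def using sigma_denom_nonzero[OF b p] by (intro tendsto_intros) auto
qed

lemma at_within_sigma_image_nontrivial:
  assumes "cmod b < 1" and "S \<subseteq> unit_disc" and "cmod p < 1" and "at p within S \<noteq> bot"
  shows "at (sigma b p) within sigma b ` S \<noteq> bot"
  using filterlim_sigma_at_within[OF assms(1-3)] assms(4) unfolding filterlim_def
  by (metis bot_unique filtermap_bot_iff)

lemma tendsto_sgn_sigma_image:
  assumes b: "cmod b < 1" and C: "C \<subseteq> unit_disc" and p: "cmod p < 1"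
    and lim: "((\<lambda>z. sgn (z - p)) \<longlongrightarrow> d) (at p within C)"
  shows "((\<lambda>w. sgn (w - sigma b p)) \<longlongrightarrow> d * sgn (sigma_diff_quotient b p p)) (at (sigma b p) within sigma b ` C)"
proof -
  let ?F = "at (sigma b p) within sigma b ` C"
  have "cmod (- b) < 1" "sigma b ` C \<subseteq> unit_disc" "cmod (sigma b p) < 1"
    using b C p norm_sigma_less_1 by auto
  then have inverse: "filterlim (sigma (- b)) (at p within C) ?F"
    using filterlim_sigma_at_within[of "- b" "sigma b ` C" "sigma b p"]
      sigma_minus_image_sigma_image[OF b C] sigma_minus_sigma[OF b p] by simp
  then have "(sigma (- b) \<longlongrightarrow> p) ?F"
    unfolding filterlim_at by blast
  then have "((\<lambda>w. sigma_diff_quotient b (sigma (- b) w) p) \<longlongrightarrow> sigma_diff_quotient b p p) ?F"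
    unfolding sigma_diff_quotient_def using sigma_denom_nonzero[OF b p] by (intro tendsto_intros) auto
  then have "((\<lambda>w. sgn (sigma (- b) w - p) * sgn (sigma_diff_quotient b (sigma (- b) w) p))
      \<longlongrightarrow> d * sgn (sigma_diff_quotient b p p)) ?F"
    using filterlim_compose[OF lim inverse] sigma_diff_quotient_nonzero[OF b p p]
    by (intro tendsto_mult tendsto_sgn) auto
  moreover have "\<forall>\<^sub>F w in ?F.
      sgn (sigma (- b) w - p) * sgn (sigma_diff_quotient b (sigma (- b) w) p) = sgn (w - sigma b p)"
    unfolding eventually_at_filter
  proof (intro always_eventually allI impI)
    fix w assume "w \<in> sigma b ` C"
    then obtain z where z: "z \<in> C" "w = sigma b z" by blast
    then have "cmod z < 1"
      using C by auto
    then show "sgn (sigma (- b) w - p) * sgn (sigma_diff_quotient b (sigma (- b) w) p) = sgn (w - sigma b p)"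
      using sigma_diff[OF b _ p] sigma_minus_sigma[OF b] z(2) by (simp add: sgn_mult)
  qed
  ultimately show ?thesis
    by (rule Lim_transform_eventually)
qed

definition geodesic_branch :: "complex \<Rightarrow> complex \<Rightarrow> complex set" where
  "geodesic_branch p q = connected_component_set (hgeodesic p q - {p}) q"

lemma tangent_dir_eq_Lim_sgn:
  "tangent_dir (hgeodesic p q) p q = Lim (at p within geodesic_branch p q) (\<lambda>z. sgn (z - p))"
  unfolding tangent_dir_def geodesic_branch_def sgn_eq ..

lemma geodesic_branch_subset_disc:
  assumes "cmod p < 1" and "cmod q < 1" and "p \<noteq> q"
  shows "geodesic_branch p q \<subseteq> unit_disc"
  using is_hgeodesic_subset_disc[OF is_hgeodesic_hgeodesic(1)[OF assms]]
    connected_component_subset[of "hgeodesic p q - {p}" q]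
  unfolding geodesic_branch_def by blast

lemma geodesic_branch_sigma:
  assumes b: "cmod b < 1" and p: "cmod p < 1" and q: "cmod q < 1" and "p \<noteq> q"
  shows "geodesic_branch (sigma b p) (sigma b q) = sigma b ` geodesic_branch p q"
proof -
  let ?G = "hgeodesic p q"
  have G: "?G \<subseteq> unit_disc" "q \<in> ?G"
    using is_hgeodesic_hgeodesic[OF p q \<open>p \<noteq> q\<close>] is_hgeodesic_subset_disc by auto
  have "hgeodesic (sigma b p) (sigma b q) - {sigma b p} = sigma b ` ?G - sigma b ` {p}"
    using hgeodesic_sigma[OF b p q \<open>p \<noteq> q\<close>] by simp
  also have "\<dots> = sigma b ` (?G - {p})"
    using inj_on_sigma[OF b] G p by (intro inj_on_image_set_diff[symmetric]) auto
  finally have branch_set: "hgeodesic (sigma b p) (sigma b q) - {sigma b p} = sigma b ` (?G - {p})" .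
  have "connected_component_set (sigma b ` (?G - {p})) (sigma b q)
      = sigma b ` connected_component_set (?G - {p}) q"
    using G \<open>p \<noteq> q\<close> by (intro connected_component_sigma_image[OF b]) auto
  then show ?thesis
    unfolding geodesic_branch_def branch_set .
qed

lemma diameter_component_subset_halfplane:
  assumes w: "cmod w < 1" "w \<noteq> 0"
  shows "connected_component_set (hcircle 0 (\<i> * w) - {0}) w \<subseteq> {z. 0 < Re (cnj w * z)}"
proof -
  let ?C = "connected_component_set (hcircle 0 (\<i> * w) - {0}) w"
  define U where "U = {z. 0 < Re (cnj w * z)}"
  define V where "V = {z. Re (cnj w * z) < 0}"
  have "open U" "open V"
    unfolding U_def V_def by (intro open_Collect_less continuous_intros)+
  have "?C \<subseteq> U \<union> V"
  proof
    fix z assume "z \<in> ?C"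
    then have "z \<in> hcircle 0 (\<i> * w)" "z \<noteq> 0"
      using connected_component_subset by blast+
    then have "Im (cnj w * z) = 0" "cnj w * z \<noteq> 0"
      using w by (auto simp: mem_hcircle_diameter_iff)
    then show "z \<in> U \<union> V"
      unfolding U_def V_def by (auto simp: complex_eq_iff)
  qed
  moreover have "U \<inter> V \<inter> ?C = {}"
    unfolding U_def V_def by auto
  ultimately have "U \<inter> ?C = {} \<or> V \<inter> ?C = {}"
    using connectedD[OF connected_connected_component \<open>open U\<close> \<open>open V\<close>] by blast
  moreover have "Re (cnj w * w) = (cmod w)\<^sup>2"
    using cmod_power2[of w] by (simp add: power2_eq_square)
  then have "w \<in> U"
    unfolding U_def using w by simp
  moreover have "w \<in> ?C"
    using w by (simp add: mem_hcircle_diameter_iff connected_component_refl_eq)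
  ultimately show ?thesis
    using \<open>?C \<subseteq> U \<union> V\<close> unfolding U_def V_def by blast
qed

lemma sgn_eq_on_ray:
  assumes "w \<noteq> 0" and "Im (cnj w * z) = 0" and "0 < Re (cnj w * z)"
  shows "sgn z = sgn w"
proof -
  define t where "t = Re (cnj w * z)"
  have "cnj w * z = of_real t"
    using assms(2) unfolding t_def by (simp add: complex_eq_iff)
  then have "of_real ((cmod w)\<^sup>2) * z = w * of_real t"
    by (simp only: complex_norm_square mult.assoc)
  moreover have "(cmod w)\<^sup>2 > 0" "t > 0"
    using assms unfolding t_def by simp_all
  ultimately show ?thesis
    by (metis sgn_mult sgn_of_real sgn_pos of_real_1 mult_1_left mult_1_right)
qed

lemma diameter_component_nontrivial_at_0:
  assumes w: "cmod w < 1" "w \<noteq> 0"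
  shows "at 0 within connected_component_set (hcircle 0 (\<i> * w) - {0}) w \<noteq> bot"
proof -
  define S where "S = (\<lambda>t. of_real t * w) ` {0<..1::real}"
  have "S \<subseteq> connected_component_set (hcircle 0 (\<i> * w) - {0}) w"
  proof (rule connected_component_maximal)
    show "w \<in> S"
      unfolding S_def by (rule image_eqI[of _ _ 1]) auto
    show "connected S"
      unfolding S_def by (intro connected_continuous_image continuous_intros) simp
    show "S \<subseteq> hcircle 0 (\<i> * w) - {0}"
    proof
      fix z assume "z \<in> S"
      then obtain t where t: "0 < t" "t \<le> 1" "z = of_real t * w"
        unfolding S_def by auto
      have "cmod z \<le> cmod w"
        using t by (simp add: norm_mult mult_left_le_one_le)
      moreover have "Im (cnj w * z) = 0" "z \<noteq> 0"
        using t w(2) by (simp_all add: algebra_simps)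
      ultimately show "z \<in> hcircle 0 (\<i> * w) - {0}"
        using w(1) by (simp add: mem_hcircle_diameter_iff)
    qed
  qed
  moreover have "0 islimpt S"
  proof -
    have "0 islimpt {0<..1::real}"
      by simp
    moreover have "\<forall>\<^sub>F t in at 0. of_real t * w \<noteq> of_real 0 * w"
      unfolding eventually_at_filter using w(2) by (intro always_eventually) simp
    ultimately have "(\<lambda>t. of_real t * w) 0 islimpt S"
      unfolding S_def by (intro islimpt_isCont_image continuous_intros)
    then show ?thesis
      by simp
  qed
  ultimately show ?thesis
    by (metis islimpt_subset trivial_limit_within)
qed

lemma tangent_limit_at_0:
  assumes w: "cmod w < 1" "w \<noteq> 0"
  shows "((\<lambda>z. sgn (z - 0)) \<longlongrightarrow> sgn w) (at 0 within geodesic_branch 0 w)"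
    and "at 0 within geodesic_branch 0 w \<noteq> bot"
proof -
  have branch: "geodesic_branch 0 w = connected_component_set (hcircle 0 (\<i> * w) - {0}) w"
    unfolding geodesic_branch_def hgeodesic_diameter[OF w] ..
  have "sgn z = sgn w" if "z \<in> geodesic_branch 0 w" for z
  proof (rule sgn_eq_on_ray[OF w(2)])
    have "z \<in> hcircle 0 (\<i> * w)"
      using that connected_component_subset unfolding branch by blast
    then show "Im (cnj w * z) = 0"
      by (simp add: mem_hcircle_diameter_iff)
    show "0 < Re (cnj w * z)"
      using that diameter_component_subset_halfplane[OF w] unfolding branch by blast
  qed
  then have "\<forall>\<^sub>F z in at 0 within geodesic_branch 0 w. sgn w = sgn (z - 0)"
    unfolding eventually_at_filter by (intro always_eventually) auto
  then show "((\<lambda>z. sgn (z - 0)) \<longlongrightarrow> sgn w) (at 0 within geodesic_branch 0 w)"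
    by (rule iffD1[OF tendsto_cong tendsto_const])
  show "at 0 within geodesic_branch 0 w \<noteq> bot"
    unfolding branch by (rule diameter_component_nontrivial_at_0[OF w])
qed

lemma tangent_limit_exists:
  assumes p: "cmod p < 1" and q: "cmod q < 1" and "p \<noteq> q"
  obtains d where "((\<lambda>z. sgn (z - p)) \<longlongrightarrow> d) (at p within geodesic_branch p q)"
    and "at p within geodesic_branch p q \<noteq> bot"
proof -
  define w where "w = sigma p q"
  have w: "cmod w < 1" "w \<noteq> 0"
    unfolding w_def using norm_sigma_less_1[OF p q] sigma_eq_0_iff[OF p q] \<open>p \<noteq> q\<close> by auto
  have mp: "cmod (- p) < 1" and "sigma (- p) 0 = p" and "sigma (- p) w = q"
    unfolding w_def using p sigma_minus_sigma[OF p q] by simp_all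
  then have "geodesic_branch p q = sigma (- p) ` geodesic_branch 0 w"
    using geodesic_branch_sigma[OF mp _ w(1), of 0] w(2) by simp
  moreover have "geodesic_branch 0 w \<subseteq> unit_disc"
    using geodesic_branch_subset_disc[of 0 w] w by simp
  ultimately show ?thesis
    using that tendsto_sgn_sigma_image[OF mp _ _ tangent_limit_at_0(1)[OF w]]
      at_within_sigma_image_nontrivial[OF mp _ _ tangent_limit_at_0(2)[OF w]] \<open>sigma (- p) 0 = p\<close>
    by auto
qed

lemma tangent_dir_sigma:
  assumes b: "cmod b < 1" and p: "cmod p < 1" and q: "cmod q < 1" and "p \<noteq> q"
  shows "tangent_dir (hgeodesic (sigma b p) (sigma b q)) (sigma b p) (sigma b q)
       = tangent_dir (hgeodesic p q) p q * sgn (sigma_diff_quotient b p p)"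
proof -
  obtain d where d: "((\<lambda>z. sgn (z - p)) \<longlongrightarrow> d) (at p within geodesic_branch p q)"
    and nontrivial: "at p within geodesic_branch p q \<noteq> bot"
    using tangent_limit_exists[OF p q \<open>p \<noteq> q\<close>] by blast
  have C: "geodesic_branch p q \<subseteq> unit_disc"
    using geodesic_branch_subset_disc[OF p q \<open>p \<noteq> q\<close>] .
  have "tangent_dir (hgeodesic p q) p q = d"
    unfolding tangent_dir_eq_Lim_sgn using d nontrivial by (simp add: tendsto_Lim)
  moreover have "tangent_dir (hgeodesic (sigma b p) (sigma b q)) (sigma b p) (sigma b q)
      = d * sgn (sigma_diff_quotient b p p)"
    unfolding tangent_dir_eq_Lim_sgn geodesic_branch_sigma[OF b p q \<open>p \<noteq> q\<close>]
    using tendsto_sgn_sigma_image[OF b C p d] at_within_sigma_image_nontrivial[OF b C p nontrivial]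
    by (simp add: tendsto_Lim)
  ultimately show ?thesis
    by simp
qed

lemma hangle_sigma:
  assumes b: "cmod b < 1" and v: "cmod v < 1" and u: "cmod u < 1" and w: "cmod w < 1"
    and "v \<noteq> u" and "v \<noteq> w"
  shows "hangle (sigma b v) (sigma b u) (sigma b w) = hangle v u w"
proof -
  define l where "l = sgn (sigma_diff_quotient b v v)"
  have "l * cnj l = 1"
    using sigma_diff_quotient_nonzero[OF b v v] unfolding l_def
    by (metis complex_norm_square norm_sgn of_real_1 one_power2)
  moreover have "x * l * cnj (y * l) = x * cnj y * (l * cnj l)" for x y
    by (simp add: algebra_simps)
  ultimately have "Re (x * l * cnj (y * l)) = Re (x * cnj y)" for x y
    by (metis mult_1_right)
  then show ?thesis
    unfolding hangle_def tangent_dir_sigma[OF b v u \<open>v \<noteq> u\<close>]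
      tangent_dir_sigma[OF b v w \<open>v \<noteq> w\<close>] l_def[symmetric]
    by simp
qed

section \<open>Sorted roots\<close>

lemma arg02_bounds: "0 \<le> arg02 z" "arg02 z < 2 * pi"
  using Arg_bounded[of z] unfolding arg02_def by auto

lemma polar_arg02: "z = of_real (cmod z) * cis (arg02 z)"
proof -
  have "cis (arg02 z) = cis (Arg z)"
    unfolding arg02_def by (simp add: complex_eq_iff)
  then show ?thesis
    using rcis_cmod_Arg[of z] unfolding rcis_def by simp
qed

lemma arg02_nth_root:
  assumes n: "n \<ge> 1" and "a \<noteq> 0" and "z ^ n = a"
  obtains m :: nat where "m < n" and "arg02 z = (arg02 a + 2 * pi * m) / n"
proof -
  have norm_eq: "cmod z ^ n = cmod a"
    using \<open>z ^ n = a\<close> norm_power[of z n] by simp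
  have "a = (of_real (cmod z) * cis (arg02 z)) ^ n"
    using \<open>z ^ n = a\<close> by (simp only: polar_arg02[of z, symmetric])
  also have "\<dots> = of_real (cmod z ^ n) * cis (n * arg02 z)"
    by (simp only: power_mult_distrib Complex.DeMoivre of_real_power)
  also have "\<dots> = of_real (cmod a) * cis (n * arg02 z)"
    by (simp only: norm_eq)
  finally have "of_real (cmod a) * cis (n * arg02 z) = of_real (cmod a) * cis (arg02 a)"
    using polar_arg02[of a] by (rule trans[OF sym])
  then have "cis (n * arg02 z) = cis (arg02 a)"
    using \<open>a \<noteq> 0\<close> by simp
  then have "cos (n * arg02 z) = cos (arg02 a) \<and> sin (n * arg02 z) = sin (arg02 a)"
    by (simp add: complex_eq_iff)
  then obtain m :: int where m: "n * arg02 z = arg02 a + 2 * pi * m"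
    using sin_cos_eq_iff by blast
  have "0 \<le> n * arg02 z"
    using arg02_bounds(1)[of z] by simp
  moreover have "n * arg02 z < 2 * pi * n"
    using mult_strict_left_mono[OF arg02_bounds(2)[of z], of "real n"] n by (simp add: mult_ac)
  ultimately have lower: "2 * pi * (- 1) < 2 * pi * m" and upper: "2 * pi * m < 2 * pi * n"
    using m arg02_bounds[of a] by linarith+
  have "(- 1 :: real) < m"
    by (rule mult_left_less_imp_less[OF lower]) simp
  moreover have "real_of_int m < n"
    by (rule mult_left_less_imp_less[OF upper]) simp
  ultimately have "- 1 < m" "m < int n"
    by simp_all
  then show ?thesis
    using m n by (intro that[of "nat m"]) (simp_all add: field_simps)
qed

lemma bounded_strict_mono_nat_eq_id:
  fixes f :: "nat \<Rightarrow> nat"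
  assumes mono: "\<And>i. Suc i < n \<Longrightarrow> f i < f (Suc i)" and bounded: "\<And>i. i < n \<Longrightarrow> f i < n"
    and "i < n"
  shows "f i = i"
proof -
  have grow: "f i + d \<le> f (i + d)" if "i + d < n" for i d
    using that by (induction d) (auto dest: mono[of "i + _"])
  show ?thesis
    using grow[of 0 i] grow[of i "n - 1 - i"] bounded[of "n - 1"] \<open>i < n\<close> by simp
qed

lemma nth_root_in_disc:
  assumes "z ^ n = a" and "n \<ge> 1" and "cmod a < 1"
  shows "cmod z < 1"
proof -
  have "cmod z ^ n < 1 ^ n"
    using assms by (simp add: norm_power[symmetric])
  then show ?thesis
    by (rule power_less_imp_less_base) simp
qed

lemma nth_roots_same_norm:
  assumes "z ^ n = a" and "w ^ n = a" and "n \<ge> 1"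
  shows "cmod z = cmod w"
  using assms norm_power[of z n] norm_power[of w n] power_eq_imp_eq_base[of "cmod z" n "cmod w"]
  by simp

lemma periodic_mod:
  assumes periodic: "\<And>j. f (j + int n) = f j"
  shows "f j = f (j mod int n)"
proof -
  have "f (i + int n * m) = f i" for i m
  proof (induction m rule: int_induct[where k = 0])
    case (step1 m)
    then show ?case
      using periodic[of "i + int n * m"] by (simp add: algebra_simps)
  next
    case (step2 m)
    then show ?case
      using periodic[of "i + int n * (m - 1)"] by (simp add: algebra_simps)
  qed simp
  from this[of "j mod int n" "j div int n"] show ?thesis
    by simp
qed

context
  fixes n :: nat and a :: complex and \<omega> :: "int \<Rightarrow> complex"
  assumes roots: "\<And>j. \<omega> j ^ n = a"
    and periodic: "\<And>j. \<omega> (j + int n) = \<omega> j"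
    and sorted: "\<And>i j. 0 \<le> i \<Longrightarrow> i < j \<Longrightarrow> j < int n \<Longrightarrow> arg02 (\<omega> i) < arg02 (\<omega> j)"
begin

lemma sorted_roots_arg02:
  assumes "n \<ge> 1" and "a \<noteq> 0" and "i < n"
  shows "arg02 (\<omega> (int i)) = (arg02 a + 2 * pi * i) / n"
proof -
  have "\<exists>m. m < n \<and> arg02 (\<omega> (int i)) = (arg02 a + 2 * pi * m) / n" for i
    by (rule arg02_nth_root[OF assms(1,2) roots]) blast
  then obtain m where m: "\<And>i. m i < n" "\<And>i. arg02 (\<omega> (int i)) = (arg02 a + 2 * pi * m i) / n"
    by metis
  have "m i < m (Suc i)" if "Suc i < n" for i
  proof -
    have "arg02 (\<omega> (int i)) < arg02 (\<omega> (int (Suc i)))"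
      using that by (intro sorted) auto
    then have "(arg02 a + 2 * pi * m i) / n < (arg02 a + 2 * pi * m (Suc i)) / n"
      by (simp only: m)
    then show ?thesis
      using \<open>n \<ge> 1\<close> by (simp add: divide_less_cancel)
  qed
  then have "m i = i"
    using bounded_strict_mono_nat_eq_id[of n m i] m(1) \<open>i < n\<close> by blast
  then show ?thesis
    using m(2)[of i] by simp
qed

lemma sorted_roots_opposite_first_half:
  assumes "n = 2 * k" and "a \<noteq> 0" and "i < k"
  shows "\<omega> (int i + int k) = - \<omega> (int i)"
proof -
  have "n \<ge> 1" "real n = 2 * real k" "real k \<noteq> 0"
    using assms(1,3) by simp_all
  then have "(arg02 a + 2 * pi * real (i + k)) / n = (arg02 a + 2 * pi * real i) / n + pi"
    by (simp add: field_simps)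
  then have arg: "arg02 (\<omega> (int i + int k)) = arg02 (\<omega> (int i)) + pi"
    using sorted_roots_arg02[OF \<open>n \<ge> 1\<close> \<open>a \<noteq> 0\<close>, of "i + k"]
      sorted_roots_arg02[OF \<open>n \<ge> 1\<close> \<open>a \<noteq> 0\<close>, of i] assms
    by simp
  have norm: "cmod (\<omega> (int i + int k)) = cmod (\<omega> (int i))"
    using nth_roots_same_norm[OF roots roots \<open>n \<ge> 1\<close>] .
  have "\<omega> (int i + int k)
      = of_real (cmod (\<omega> (int i + int k))) * cis (arg02 (\<omega> (int i + int k)))"
    by (rule polar_arg02)
  also have "\<dots> = - (of_real (cmod (\<omega> (int i))) * cis (arg02 (\<omega> (int i))))"
    by (simp only: arg norm minus_cis[symmetric] mult_minus_right)
  also have "\<dots> = - \<omega> (int i)"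
    by (simp only: polar_arg02[symmetric])
  finally show ?thesis .
qed

lemma sorted_roots_opposite:
  assumes "k \<ge> 1" and "n = 2 * k" and "a \<noteq> 0"
  shows "\<omega> (j + int k) = - \<omega> j"
proof -
  have residues: "\<omega> (int i + int k) = - \<omega> (int i)" if "i < n" for i
  proof (cases "i < k")
    case False
    then obtain i' where i': "i = i' + k" "i' < k"
      using \<open>i < n\<close> assms(2) by (metis add.commute add_less_cancel_left le_Suc_ex mult_2 not_less)
    then have "\<omega> (int i + int k) = \<omega> (int i')"
      using periodic[of "int i'"] assms(2) by (simp add: algebra_simps)
    also have "\<dots> = - \<omega> (int i)"
      using sorted_roots_opposite_first_half[OF assms(2,3) i'(2)] i'(1) by simp
    finally show ?thesis .
  qed (use sorted_roots_opposite_first_half[OF assms(2,3)] in simp)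
  have "int n > 0"
    using assms(1,2) by simp
  define i where "i = nat (j mod int n)"
  have i: "int i = j mod int n" "i < n"
    using pos_mod_sign[OF \<open>int n > 0\<close>, of j] pos_mod_bound[OF \<open>int n > 0\<close>, of j]
    unfolding i_def by simp_all
  have "\<omega> (j + int k) = \<omega> ((int i + int k) mod int n)"
    using periodic_mod[of \<omega> n, OF periodic, of "j + int k"] i(1) by (simp add: mod_add_left_eq)
  also have "\<dots> = - \<omega> (int i)"
    using periodic_mod[of \<omega> n, OF periodic, of "int i + int k"] residues[OF i(2)] by simp
  also have "\<omega> (int i) = \<omega> j"
    using periodic_mod[of \<omega> n, OF periodic, of j] i(1) by simp
  finally show ?thesis .
qed

lemma sorted_roots_neighbours_distinct:
  assumes "n \<ge> 2"
  shows "\<omega> (j + 1) \<noteq> \<omega> j"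
proof
  assume eq: "\<omega> (j + 1) = \<omega> j"
  define x y where "x = j mod int n" and "y = (j + 1) mod int n"
  have "x \<noteq> y"
  proof
    assume "x = y"
    then have "int n dvd (j + 1) - j"
      unfolding x_def y_def by (simp add: mod_eq_dvd_iff)
    then have "n dvd 1"
      by (metis add_diff_cancel_left' add.commute int_dvd_int_iff of_nat_1)
    then show False
      using assms by simp
  qed
  moreover have "0 \<le> x" "x < int n" "0 \<le> y" "y < int n"
    using assms unfolding x_def y_def by simp_all
  ultimately have "arg02 (\<omega> x) \<noteq> arg02 (\<omega> y)"
    using sorted[of x y] sorted[of y x] by (cases "x < y") auto
  then show False
    using eq periodic_mod[of \<omega> n, OF periodic, of j] periodic_mod[of \<omega> n, OF periodic, of "j + 1"]
    unfolding x_def y_def by simp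
qed

end

theorem proposition3p7:
  fixes k :: nat and n :: nat and a :: complex and \<omega> :: "int \<Rightarrow> complex"
  assumes "k \<ge> 1" and "n = 2 * k"
    and "cmod a < 1" and "a \<noteq> 0"
    and roots: "\<And>j. \<omega> j ^ n = a"
    and periodic: "\<And>j. \<omega> (j + int n) = \<omega> j"
    and sorted: "\<And>i j. 0 \<le> i \<Longrightarrow> i < j \<Longrightarrow> j < int n \<Longrightarrow> arg02 (\<omega> i) < arg02 (\<omega> j)"
  shows "(\<forall>j. sigma a (- \<omega> j) = sigma a (\<omega> (j + int k)) \<and>
              - a \<in> hgeodesic (sigma a (\<omega> j)) (sigma a (\<omega> (j + int k))))
       \<and> (\<forall>j. hangle (sigma a (\<omega> j)) (sigma a (\<omega> (j - 1))) (sigma a (\<omega> (j + 1)))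
              = hangle (\<omega> j) (\<omega> (j - 1)) (\<omega> (j + 1)))"
proof -
  have "n \<ge> 1" "n \<ge> 2"
    using assms(1,2) by simp_all
  have disc: "cmod (\<omega> j) < 1" for j
    using nth_root_in_disc[OF roots \<open>n \<ge> 1\<close> assms(3)] .
  have nonzero: "\<omega> j \<noteq> 0" for j
    using roots[of j] \<open>n \<ge> 1\<close> assms(4) by auto
  have opposite: "\<omega> (j + int k) = - \<omega> j" for j
    using sorted_roots_opposite[of \<omega> n a, OF roots periodic sorted assms(1,2,4)] .
  have neighbours: "\<omega> (j + 1) \<noteq> \<omega> j" for j
    using sorted_roots_neighbours_distinct[of \<omega> n a, OF roots periodic sorted \<open>n \<ge> 2\<close>] .
  show ?thesis
  proof (intro conjI allI)
    fix j
    show "sigma a (- \<omega> j) = sigma a (\<omega> (j + int k))"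
      by (simp add: opposite)
    show "- a \<in> hgeodesic (sigma a (\<omega> j)) (sigma a (\<omega> (j + int k)))"
      using neg_in_hgeodesic_sigma_opposite[OF assms(3) disc nonzero] by (simp add: opposite)
    show "hangle (sigma a (\<omega> j)) (sigma a (\<omega> (j - 1))) (sigma a (\<omega> (j + 1)))
        = hangle (\<omega> j) (\<omega> (j - 1)) (\<omega> (j + 1))"
      using neighbours[of j] neighbours[of "j - 1"] by (intro hangle_sigma assms(3) disc) auto
  qed
qed

end
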